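(* Let $(\mathcal{X},\rho)$ be a metric space, $\eta:\mathcal{X}\to\mathcal{Y}$ a function, and $x\in\mathcal{X}$. For any $0<r<\mathrm{margin}_\eta(x)/3$, the open ball $B(x,r)$ is mutually-labeling for $\eta$.
   Context: $\mathrm{margin}_\eta(x)=\inf\{\rho(x,x'):\eta(x')\ne\eta(x)\}$ (infimum of empty set $=+\infty$). A set $U$ is mutually-labeling for $\eta$ if $\mathrm{diam}(U)<\mathrm{margin}_\eta(x)$ for all $x\in U$, where $\mathrm{diam}(U)=\sup_{z,z'\in U}\rho(z,z')$. *)

theory Defs
  imports "HOL-Analysis.Analysis" "HOL-Library.Extended_Real"
begin

text \<open>margin, valued in extended reals so that the infimum of the empty set is +infinity.\<close>
definition margin :: "('a::metric_space \<Rightarrow> 'b) \<Rightarrow> 'a \<Rightarrow> ereal" where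
  "margin \<eta> x = (INF x'\<in>{x'. \<eta> x' \<noteq> \<eta> x}. ereal (dist x x'))"

definition diam_e :: "('a::metric_space) set \<Rightarrow> ereal" where
  "diam_e U = (SUP p\<in>U \<times> U. ereal (dist (fst p) (snd p)))"

definition mutually_labeling :: "('a::metric_space \<Rightarrow> 'b) \<Rightarrow> 'a set \<Rightarrow> bool" where
  "mutually_labeling \<eta> U \<longleftrightarrow> (\<forall>x\<in>U. diam_e U < margin \<eta> x)"

end

theory Submission
  imports Defs
begin

text \<open>The margin is 1-Lipschitz, so every point of \<open>B(x, r)\<close> has margin greater than
  \<open>margin \<eta> x - r > 2r\<close>, while the ball has diameter at most \<open>2r\<close>.\<close>

lemma margin_le_dist:
  assumes "\<eta> x' \<noteq> \<eta> x"
  shows "margin \<eta> x \<le> ereal (dist x x')"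
  unfolding margin_def using assms by (auto intro: INF_lower)

lemma margin_le_margin_add_dist:
  "margin \<eta> x \<le> margin \<eta> y + ereal (dist x y)"
proof -
  have "margin \<eta> x - ereal (dist x y) \<le> margin \<eta> y"
    unfolding margin_def [of \<eta> y]
  proof (rule INF_greatest)
    fix x' assume "x' \<in> {x'. \<eta> x' \<noteq> \<eta> y}"
    then have "\<eta> x' \<noteq> \<eta> x \<or> \<eta> y \<noteq> \<eta> x" by auto
    then have "margin \<eta> x \<le> ereal (dist x x') \<or> margin \<eta> x \<le> ereal (dist x y)"
      using margin_le_dist by blast
    moreover have "dist x x' \<le> dist y x' + dist x y" "dist x y \<le> dist y x' + dist x y"
      using dist_triangle [of x x' y] by (simp_all add: dist_commute)
    ultimately have "margin \<eta> x \<le> ereal (dist y x') + ereal (dist x y)"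
      by (auto elim: order_trans)
    then show "margin \<eta> x - ereal (dist x y) \<le> ereal (dist y x')"
      by (simp add: ereal_minus_le)
  qed
  then show ?thesis by (simp add: ereal_minus_le)
qed

lemma diam_e_ball_le: "diam_e (ball x r) \<le> ereal (2 * r)"
  unfolding diam_e_def
proof (rule SUP_least)
  fix p assume "p \<in> ball x r \<times> ball x r"
  then show "ereal (dist (fst p) (snd p)) \<le> ereal (2 * r)"
    using dist_triangle [of "fst p" "snd p" x] by (auto simp: dist_commute mem_Times_iff)
qed

theorem lemma3:
  fixes \<eta> :: "'a::metric_space \<Rightarrow> 'b" and x :: 'a and r :: real
  assumes "0 < r" and "ereal r < margin \<eta> x / 3"
  shows "mutually_labeling \<eta> (ball x r)"
  unfolding mutually_labeling_def
proof
  fix y assume "y \<in> ball x r"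
  have "ereal (3 * r) < margin \<eta> x"
    using assms(2) by (simp add: ereal_less_divide_iff mult.commute)
  also have "\<dots> \<le> margin \<eta> y + ereal (dist x y)"
    by (rule margin_le_margin_add_dist)
  finally have margin_y: "ereal (3 * r - dist x y) < margin \<eta> y"
    using ereal_minus_less [of "ereal (dist x y)" "ereal (3 * r)"] by simp
  have "diam_e (ball x r) \<le> ereal (2 * r)"
    by (rule diam_e_ball_le)
  also have "\<dots> < ereal (3 * r - dist x y)"
    using \<open>y \<in> ball x r\<close> by simp
  also note margin_y
  finally show "diam_e (ball x r) < margin \<eta> y" .
qed

end
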